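(* Let $\mu$ be a non-degenerate probability measure on $\mathbb{C}$ (not a point mass), $X_1, X_2,\ldots$ iid with law $\mu$, $0\le k_n\le n$ deterministic integers with $k_n = o(n)$, and $\xi_1^{(n)},\ldots,\xi_{k_n}^{(n)}$ a deterministic triangular array of complex numbers such that, for some Lebesgue-null set $E\subset\mathbb{C}$, $\limsup_{n\to\infty}\frac1n\sum_{l=1}^{k_n}\log_-|z-\xi_l^{(n)}| = 0$ for all $z\in\mathbb{C}\setminus E$. Let \[ L_n(z) := \sum_{j=1}^{n-k_n}\frac{1}{z - X_j} + \sum_{l=1}^{k_n}\frac{1}{z - \xi_l^{(n)}}. \] Then there is a set $F \subset \mathbb{C}$ of Lebesgue measure zero such that for every $z \in \mathbb{C}\setminus F$, $\frac{1}{n}\log|L_n(z)| \to 0$ in probability as $n \to \infty$.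
   Context: $\log_- x := |\log x|$ for $0 \le x \le 1$, $\log_- x := 0$ for $x \ge 1$, $\log_-(0) := \infty$. $L_n = p_n'/p_n$ is the logarithmic derivative of $p_n(z) = \prod_{j=1}^{n-k_n}(z-X_j)\prod_{l=1}^{k_n}(z-\xi_l^{(n)})$. *)

theory Defs
  imports "HOL-Probability.Probability"
begin

definition log_minus :: "real \<Rightarrow> ereal" where
  "log_minus x = (if x = 0 then \<infinity> else if x \<le> 1 then ereal (\<bar>ln x\<bar>) else 0)"

text \<open>The logarithmic derivative L_n(z) (finite part; poles are handled separately
  in the statement).\<close>
definition Ln_fun :: "(nat \<Rightarrow> nat) \<Rightarrow> (nat \<Rightarrow> nat \<Rightarrow> complex) \<Rightarrow> (nat \<Rightarrow> complex)
    \<Rightarrow> nat \<Rightarrow> complex \<Rightarrow> complex" where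
  "Ln_fun k \<xi> x n z =
     (\<Sum>j\<in>{1..n - k n}. 1 / (z - x j)) + (\<Sum>l\<in>{1..k n}. 1 / (z - \<xi> n l))"

end

theory Submission
  imports Defs "HOL-Real_Asymp.Real_Asymp"
begin

text \<open>
  Fix z and eps > 0. Upper bound: by the hypothesis on the xi, every |1/(z - xi_l)| is eventually
  at most exp(eps n / 4); by Fubini, the sum over n of n mu(B(z, n^-2)) is finite for
  Lebesgue-almost every z, so with probability tending to one all |1/(z - X_j)| are at most
  (n+1)^2. Hence |L_n(z)| < exp(eps n) eventually.
  Lower bound: mu is not a point mass, hence neither is the law of 1/(z - X), so for a suitable
  unit u the i.i.d. real variables Re(conj u / (z - X_j)) are non-degenerate. Majorising the
  indicator of a short interval by a Fejer-type trigonometric kernel bounds the probability that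
  a sum of m such variables lies in an interval of length 2 delta by values of the characteristic
  function raised to the power m; these tend to zero, uniformly in the position of the interval.
  Since n - k_n tends to infinity, |L_n(z)| > delta > exp(-eps n) with probability tending to one.
\<close>

section \<open>Non-degenerate distributions\<close>

lemma cdf_strictly_between_if_not_return:
  assumes "real_distribution \<nu>" and not_dirac: "\<And>a. \<nu> \<noteq> return borel a"
  shows "\<exists>r. 0 < cdf \<nu> r \<and> cdf \<nu> r < 1"
proof (rule ccontr)
  interpret real_distribution \<nu> by fact
  assume "\<not> ?thesis"
  then have cdf_01: "cdf \<nu> r = 0 \<or> cdf \<nu> r = 1" for r
    using cdf_nonneg[of r] cdf_bounded_prob[of r] by (smt (verit))
  define S where "S = {r. cdf \<nu> r = 1}"
  have "\<forall>\<^sub>F x in at_top. cdf \<nu> x > 1/2"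
    using cdf_lim_at_top_prob by (rule order_tendstoD) simp
  then obtain b where "b \<in> S"
    using cdf_01 by (force simp: S_def eventually_at_top_linorder)
  have "\<forall>\<^sub>F x in at_bot. cdf \<nu> x < 1/2"
    using cdf_lim_at_bot by (rule order_tendstoD) simp
  then obtain b' where b': "\<And>x. x \<le> b' \<Longrightarrow> cdf \<nu> x < 1/2"
    by (auto simp: eventually_at_bot_linorder)
  have "bdd_below S"
  proof (rule bdd_belowI)
    fix x assume "x \<in> S"
    then show "b' \<le> x" using b'[of x] by (force simp: S_def)
  qed
  define a where "a = Inf S"
  have above: "cdf \<nu> x = 1" if x: "x > a" for x
  proof -
    obtain s where "s \<in> S" "s < x" using cInf_lessD[of S x] \<open>b \<in> S\<close> x a_def by auto
    then show ?thesis using cdf_nondecreasing[of s x] cdf_01[of x] by (auto simp: S_def)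
  qed
  have below: "cdf \<nu> x = 0" if "x < a" for x
    using cInf_lower[OF _ \<open>bdd_below S\<close>, of x] that cdf_01[of x] by (auto simp: a_def S_def)
  have "cdf \<nu> a = 1"
  proof (rule tendsto_unique[OF trivial_limit_at_right_real])
    show "(cdf \<nu> \<longlongrightarrow> cdf \<nu> a) (at_right a)"
      using cdf_is_right_cont[of a] by (simp add: continuous_within)
    show "(cdf \<nu> \<longlongrightarrow> 1) (at_right a)"
      by (rule tendsto_eventually) (auto simp: eventually_at_right_field intro!: exI[of _ "a+1"] above)
  qed
  have "real_distribution (return borel a)"
    by (simp add: real_distribution_def real_distribution_axioms_def prob_space_return)
  moreover have "cdf \<nu> x = cdf (return borel a) x" for x
    using above[of x] below[of x] \<open>cdf \<nu> a = 1\<close>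
    by (cases x a rule: linorder_cases) (auto simp: cdf_def measure_return)
  ultimately have "\<nu> = return borel a"
    using cdf_unique[OF real_distribution_axioms] by blast
  with not_dirac show False by blast
qed

lemma ex_adjacent_intervals_measure_pos:
  assumes "real_distribution \<nu>" and "0 < cdf \<nu> r" "cdf \<nu> r < 1"
  shows "\<exists>R>0. measure \<nu> {r-R<..r} > 0 \<and> measure \<nu> {r<..r+R} > 0"
proof -
  interpret real_distribution \<nu> by fact
  have "\<forall>\<^sub>F x in at_bot. cdf \<nu> x < cdf \<nu> r"
    by (rule order_tendstoD(2)[OF cdf_lim_at_bot \<open>0 < cdf \<nu> r\<close>])
  then obtain b where b: "\<And>x. x \<le> b \<Longrightarrow> cdf \<nu> x < cdf \<nu> r"
    by (auto simp: eventually_at_bot_linorder)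
  have "\<forall>\<^sub>F x in at_top. cdf \<nu> x > cdf \<nu> r"
    by (rule order_tendstoD(1)[OF cdf_lim_at_top_prob \<open>cdf \<nu> r < 1\<close>])
  then obtain b' where b': "\<And>x. x \<ge> b' \<Longrightarrow> cdf \<nu> x > cdf \<nu> r"
    by (auto simp: eventually_at_top_linorder)
  define R where "R = max 1 (max (r - b) (b' - r))"
  have "R > 0" "r - R \<le> b" "r + R \<ge> b'" by (auto simp: R_def)
  then show ?thesis
    using cdf_diff_eq[of "r-R" r] cdf_diff_eq[of r "r+R"] b[of "r-R"] b'[of "r+R"]
    by (auto intro!: exI[of _ R])
qed

lemma ex_in_set_if_AE:
  assumes "AE x in M. P x" "A \<in> sets M" "measure M A > 0"
  shows "\<exists>x\<in>A. P x"
proof (rule ccontr)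
  assume "\<not> ?thesis"
  then have "AE x in M. x \<notin> A" using assms(1) by (auto elim: AE_mp)
  then have "A \<in> null_sets M" using AE_iff_null_sets[OF assms(2)] by simp
  then show False using assms(3) by (simp add: measure_def null_setsD1)
qed

lemma AE_iexp_eq_char_if_norm_char_eq_1:
  assumes "real_distribution \<nu>" and norm_1: "cmod (char \<nu> u) = 1"
  shows "AE x in \<nu>. iexp (u * x) = char \<nu> u"
proof -
  interpret real_distribution \<nu> by fact
  define p where "p = char \<nu> u"
  define f where "f x = Re (cnj p * iexp (u * x))" for x
  have int_iexp: "integrable \<nu> (\<lambda>x. iexp (u * x))"
    by (rule integrable_const_bound[of _ 1]) (auto simp del: of_real_mult)
  have norm_phase: "cmod (cnj p * iexp (u * x)) = 1" for x
    using norm_1 by (simp add: p_def norm_mult del: of_real_mult)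
  have "integral\<^sup>L \<nu> f = Re (cnj p * p)"
    using integral_Re[OF integrable_mult_right[OF int_iexp, of "cnj p"]]
    unfolding f_def by (simp only: integral_mult_right_zero p_def char_def)
  also have "\<dots> = 1"
    using norm_1 complex_norm_square[of p] by (simp add: p_def mult.commute)
  finally have "integral\<^sup>L \<nu> f = 1" .
  moreover have "integrable \<nu> f"
    unfolding f_def by (intro integrable_Re integrable_mult_right int_iexp)
  ultimately have "integral\<^sup>L \<nu> (\<lambda>x. 1 - f x) = 0"
    by (simp add: Bochner_Integration.integral_diff prob_space[unfolded space_eq_univ])
  moreover have "f x \<le> 1" for x
    using complex_Re_le_cmod[of "cnj p * iexp (u * x)"] norm_phase[of x] by (simp add: f_def)
  ultimately have "AE x in \<nu>. 1 - f x = 0"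
    using int_iexp by (subst integral_nonneg_eq_0_iff_AE[symmetric]) (auto simp: f_def)
  then show ?thesis
  proof (rule AE_mp, intro AE_I2 impI)
    fix x assume "1 - f x = 0"
    with norm_phase[of x] have "cnj p * iexp (u * x) = 1"
      by (simp add: f_def complex_eq_iff cmod_def power2_eq_square)
    have "p * cnj p = 1"
      using complex_norm_square[of p] norm_1 by (simp add: p_def)
    then have "iexp (u * x) = p * (cnj p * iexp (u * x))" by (metis mult.assoc mult_1)
    then show "iexp (u * x) = char \<nu> u"
      using \<open>cnj p * iexp (u * x) = 1\<close> by (metis mult_1_right p_def)
  qed
qed

lemma norm_char_less_1_near_0:
  assumes "real_distribution \<nu>" and "R > 0"
    and pos: "measure \<nu> {r-R<..r} > 0" "measure \<nu> {r<..r+R} > 0"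
    and "u \<noteq> 0" "\<bar>u\<bar> \<le> pi / (2 * R)"
  shows "cmod (char \<nu> u) < 1"
proof (rule ccontr)
  (* Otherwise \<nu> lives on a coset of (2 pi / u) \<int>, too sparse to meet both intervals. *)
  interpret real_distribution \<nu> by fact
  assume "\<not> cmod (char \<nu> u) < 1"
  then have norm_1: "cmod (char \<nu> u) = 1"
    using cmod_char_le_1 by (simp add: antisym_conv2)
  from AE_iexp_eq_char_if_norm_char_eq_1[OF assms(1) this]
  have AE: "AE x in \<nu>. iexp (u * x) = char \<nu> u" .
  obtain x1 where x1: "x1 \<in> {r-R<..r}" "iexp (u * x1) = char \<nu> u"
    using ex_in_set_if_AE[OF AE _ pos(1)] by auto
  obtain x2 where x2: "x2 \<in> {r<..r+R}" "iexp (u * x2) = char \<nu> u"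
    using ex_in_set_if_AE[OF AE _ pos(2)] by auto
  have "iexp (u * (x2 - x1)) = iexp (u * x2) / iexp (u * x1)"
    by (simp add: right_diff_distrib exp_diff[symmetric] algebra_simps)
  also have "\<dots> = 1" using x1 x2 norm_1 by auto
  finally have "cos (u * (x2 - x1)) = 1"
    using Re_exp[of "\<i> * complex_of_real (u * (x2 - x1))"] by simp
  then obtain n :: int where n: "u * (x2 - x1) = real_of_int n * 2 * pi"
    using cos_one_2pi_int by blast
  have d: "0 < x2 - x1" "x2 - x1 < 2 * R" using x1(1) x2(1) by auto
  have "\<bar>u\<bar> * (x2 - x1) < pi / (2 * R) * (2 * R)"
    using d \<open>u \<noteq> 0\<close> \<open>\<bar>u\<bar> \<le> pi / (2 * R)\<close> by (intro mult_le_less_imp_less) auto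
  moreover have "\<bar>u\<bar> * (x2 - x1) = \<bar>real_of_int n\<bar> * (2 * pi)"
    using arg_cong[OF n, of abs] d by (simp add: abs_mult)
  ultimately have "\<bar>real_of_int n\<bar> * 2 < 1"
    using \<open>R > 0\<close> by simp
  then have "n = 0" by linarith
  then show False using n d \<open>u \<noteq> 0\<close> by simp
qed

lemma return_eq_if_AE_eq:
  assumes "prob_space \<mu>" "sets \<mu> = sets borel" "AE x in \<mu>. x = c"
  shows "\<mu> = return borel c"
proof (rule measure_eqI)
  interpret prob_space \<mu> by fact
  show "sets \<mu> = sets (return borel c)" using assms(2) by simp
  fix A assume A: "A \<in> sets \<mu>"
  have "emeasure \<mu> A = (\<integral>\<^sup>+ x. indicator A x \<partial>\<mu>)" using A by simp
  also have "\<dots> = (\<integral>\<^sup>+ x. indicator A c \<partial>\<mu>)"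
    using assms(3) by (intro nn_integral_cong_AE) (auto elim: AE_mp)
  also have "\<dots> = emeasure (return borel c) A" using A assms(2) by (simp add: emeasure_space_1)
  finally show "emeasure \<mu> A = emeasure (return borel c) A" .
qed

lemma AE_eq_if_distr_eq_return:
  fixes f :: "'a \<Rightarrow> 'b::t1_space"
  assumes "distr \<mu> borel f = return borel c" "f \<in> borel_measurable \<mu>"
  shows "AE x in \<mu>. f x = c"
proof -
  have "AE y in distr \<mu> borel f. y = c" unfolding assms(1) by (simp add: AE_return)
  then show ?thesis using assms(2) by (simp add: AE_distr_iff)
qed

lemma distr_not_return_if_left_inverse:
  fixes f :: "'a::topological_space \<Rightarrow> 'b::t1_space"
  assumes "prob_space \<mu>" "sets \<mu> = sets borel" and not_dirac: "\<And>a. \<mu> \<noteq> return borel a"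
    and f_measurable: "f \<in> borel_measurable borel" and inverse: "\<And>x. g (f x) = x"
  shows "distr \<mu> borel f \<noteq> return borel c"
proof
  assume "distr \<mu> borel f = return borel c"
  moreover have "f \<in> borel_measurable \<mu>"
    using f_measurable by (simp add: measurable_cong_sets[OF assms(2) refl])
  ultimately have "AE x in \<mu>. f x = c" by (rule AE_eq_if_distr_eq_return)
  then have "AE x in \<mu>. x = g c" by eventually_elim (metis inverse)
  with return_eq_if_AE_eq[OF assms(1,2)] not_dirac show False by blast
qed

lemma ex_direction_distr_not_return:
  fixes \<nu> :: "complex measure"
  assumes "prob_space \<nu>" "sets \<nu> = sets borel" and not_dirac: "\<And>a. \<nu> \<noteq> return borel a"
  shows "\<exists>u. cmod u = 1 \<and> (\<forall>a. distr \<nu> borel (\<lambda>w. Re (cnj u * w)) \<noteq> return borel a)"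
proof (rule ccontr)
  assume "\<not> ?thesis"
  then obtain a b where a: "distr \<nu> borel (\<lambda>w. Re (cnj 1 * w)) = return borel a"
    and b: "distr \<nu> borel (\<lambda>w. Re (cnj \<i> * w)) = return borel b"
    by (metis norm_one norm_ii)
  have "AE w in \<nu>. Re (cnj 1 * w) = a" "AE w in \<nu>. Re (cnj \<i> * w) = b"
    using AE_eq_if_distr_eq_return[OF a] AE_eq_if_distr_eq_return[OF b] assms(2)
    by (simp_all add: measurable_cong_sets[OF assms(2) refl])
  then have "AE w in \<nu>. w = Complex a b"
    by eventually_elim (simp add: complex_eq_iff)
  with return_eq_if_AE_eq[OF assms(1,2)] not_dirac show False by blast
qed

section \<open>Anti-concentration of sums of i.i.d. real variables\<close>

lemma square_sum_cos_ge:
  fixes t :: real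
  assumes "real N * \<bar>t\<bar> \<le> 1"
  shows "(real N * cos 1)^2 \<le> (\<Sum>k<N. cos (real k * t))^2"
proof -
  have "cos 1 \<le> cos (real k * t)" if "k < N" for k
  proof -
    have "\<bar>real k * t\<bar> \<le> real N * \<bar>t\<bar>"
      using that by (simp add: abs_mult mult_right_mono)
    then have "cos 1 \<le> cos \<bar>real k * t\<bar>"
      using assms pi_gt3 by (intro cos_monotone_0_pi_le) auto
    then show ?thesis by simp
  qed
  then have "(\<Sum>k<N. cos 1) \<le> (\<Sum>k<N. cos (real k * t))"
    by (intro sum_mono) simp
  then have "real N * cos 1 \<le> (\<Sum>k<N. cos (real k * t))" by simp
  moreover have "0 \<le> real N * cos 1"
    using pi_gt3 by (intro mult_nonneg_nonneg cos_ge_zero) auto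
  ultimately show ?thesis by (intro power_mono)
qed

lemma square_sum_cos_plus_square_sum_sin:
  fixes a :: "nat \<Rightarrow> real"
  shows "(\<Sum>k<N. cos (a k))^2 + (\<Sum>k<N. sin (a k))^2 = (\<Sum>k<N. \<Sum>l<N. cos (a k - a l))"
  by (simp add: power2_eq_square sum_product sum.distrib[symmetric] cos_diff)

lemma indicator_le_fejer_kernel:
  fixes y T :: real
  assumes "N \<ge> 1" "T > 0"
  shows "indicator {y. \<bar>y\<bar> \<le> 1/T} y
    \<le> (\<Sum>k<N. \<Sum>l<N. cos ((real k - real l) * (T / N) * y)) / (real N * cos 1)^2"
proof -
  have kernel: "(\<Sum>k<N. \<Sum>l<N. cos ((real k - real l) * (T / N) * y))
      = (\<Sum>k<N. cos (real k * (T / N * y)))^2 + (\<Sum>k<N. sin (real k * (T / N * y)))^2"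
    by (subst square_sum_cos_plus_square_sum_sin) (simp add: algebra_simps)
  have pos: "(real N * cos 1)^2 > 0"
    using assms cos_gt_zero[of 1] pi_gt3 by simp
  show ?thesis
  proof (cases "\<bar>y\<bar> \<le> 1/T")
    case True
    then have "real N * \<bar>T / N * y\<bar> \<le> 1"
      using assms by (simp add: abs_mult field_simps)
    from square_sum_cos_ge[OF this] True pos show ?thesis
      unfolding kernel by (simp add: add_increasing2)
  next
    case False
    then show ?thesis using pos unfolding kernel by simp
  qed
qed

lemma integral_cos_sum_le_norm_char_pow:
  fixes W :: "'i \<Rightarrow> 'a \<Rightarrow> real"
  assumes "prob_space M" and indep: "prob_space.indep_vars M (\<lambda>_. borel) W J"
    and "finite J" and law: "\<And>j. j \<in> J \<Longrightarrow> distr M borel (W j) = \<nu>"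
  shows "integral\<^sup>L M (\<lambda>\<omega>. cos (u * ((\<Sum>j\<in>J. W j \<omega>) - c))) \<le> cmod (char \<nu> u) ^ card J"
proof -
  interpret prob_space M by fact
  have [measurable]: "W j \<in> borel_measurable M" if "j \<in> J" for j
    using indep that by (auto simp: indep_vars_def)
  define S where "S \<omega> = (\<Sum>j\<in>J. W j \<omega>)" for \<omega>
  have [measurable]: "S \<in> borel_measurable M" unfolding S_def by measurable
  have int_iexp: "integrable M (\<lambda>\<omega>. iexp (-(u * c)) * iexp (u * S \<omega>))"
    by (intro integrable_mult_right integrable_const_bound[of _ 1]) (auto simp del: of_real_mult)
  have cos_eq: "cos (u * (S \<omega> - c)) = Re (iexp (-(u * c)) * iexp (u * S \<omega>))" for \<omega>
    by (simp add: Re_exp exp_add[symmetric] algebra_simps)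
  have "integral\<^sup>L M (\<lambda>\<omega>. cos (u * (S \<omega> - c)))
      = Re (iexp (-(u * c)) * integral\<^sup>L M (\<lambda>\<omega>. iexp (u * S \<omega>)))"
    unfolding cos_eq using integral_Re[OF int_iexp] by (simp only: integral_mult_right_zero)
  also have "\<dots> \<le> cmod (iexp (-(u * c)) * integral\<^sup>L M (\<lambda>\<omega>. iexp (u * S \<omega>)))"
    by (rule complex_Re_le_cmod)
  also have "\<dots> = cmod (integral\<^sup>L M (\<lambda>\<omega>. iexp (u * S \<omega>)))"
    by (simp add: norm_mult del: of_real_mult)
  also have "integral\<^sup>L M (\<lambda>\<omega>. iexp (u * S \<omega>)) = char (distr M borel S) u"
    by (simp add: char_def integral_distr)
  also have "\<dots> = (\<Prod>j\<in>J. char (distr M borel (W j)) u)"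
    unfolding S_def by (rule char_distr_sum[OF indep])
  also have "\<dots> = (\<Prod>j\<in>J. char \<nu> u)" using law by simp
  finally show ?thesis by (simp add: S_def norm_power)
qed

lemma measure_small_ball_sum_le_char:
  fixes W :: "'i \<Rightarrow> 'a \<Rightarrow> real"
  assumes "prob_space M" and indep: "prob_space.indep_vars M (\<lambda>_. borel) W J"
    and "finite J" and law: "\<And>j. j \<in> J \<Longrightarrow> distr M borel (W j) = \<nu>"
    and "N \<ge> 1" "T > 0"
  shows "measure M {\<omega>\<in>space M. \<bar>(\<Sum>j\<in>J. W j \<omega>) - c\<bar> \<le> 1/T}
    \<le> (\<Sum>k<N. \<Sum>l<N. cmod (char \<nu> ((real k - real l) * (T / N))) ^ card J) / (real N * cos 1)^2"
proof -
  interpret prob_space M by fact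
  have [measurable]: "W j \<in> borel_measurable M" if "j \<in> J" for j
    using indep that by (auto simp: indep_vars_def)
  define S where "S \<omega> = (\<Sum>j\<in>J. W j \<omega>) - c" for \<omega>
  have [measurable]: "S \<in> borel_measurable M" unfolding S_def by measurable
  define K where "K y = (\<Sum>k<N. \<Sum>l<N. cos ((real k - real l) * (T / N) * y)) / (real N * cos 1)^2" for y
  have int_cos: "integrable M (\<lambda>\<omega>. cos (t * S \<omega>))" for t
    by (rule integrable_const_bound[of _ 1]) auto
  have "measure M {\<omega>\<in>space M. \<bar>S \<omega>\<bar> \<le> 1/T} = integral\<^sup>L M (indicator {\<omega>\<in>space M. \<bar>S \<omega>\<bar> \<le> 1/T})"
    by simp
  also have "\<dots> = integral\<^sup>L M (\<lambda>\<omega>. indicator {y. \<bar>y\<bar> \<le> 1/T} (S \<omega>))"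
    by (intro Bochner_Integration.integral_cong) (auto simp: indicator_def)
  also have "\<dots> \<le> integral\<^sup>L M (\<lambda>\<omega>. K (S \<omega>))"
  proof (rule integral_mono)
    show "integrable M (\<lambda>\<omega>. indicator {y. \<bar>y\<bar> \<le> 1/T} (S \<omega>) :: real)"
      by (rule integrable_const_bound[of _ 1]) (auto simp: indicator_def)
    show "integrable M (\<lambda>\<omega>. K (S \<omega>))"
      unfolding K_def by (intro integrable_divide Bochner_Integration.integrable_sum int_cos)
  qed (use indicator_le_fejer_kernel[OF assms(5,6)] in \<open>simp add: K_def\<close>)
  also have "\<dots> = (\<Sum>k<N. \<Sum>l<N. integral\<^sup>L M (\<lambda>\<omega>. cos ((real k - real l) * (T / N) * S \<omega>)))
      / (real N * cos 1)^2"
    unfolding K_def integral_divide_zero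
    by (simp only: Bochner_Integration.integral_sum Bochner_Integration.integrable_sum int_cos)
  also have "\<dots> \<le> (\<Sum>k<N. \<Sum>l<N. cmod (char \<nu> ((real k - real l) * (T / N))) ^ card J)
      / (real N * cos 1)^2"
  proof (intro divide_right_mono sum_mono)
    fix k l
    show "integral\<^sup>L M (\<lambda>\<omega>. cos ((real k - real l) * (T / N) * S \<omega>))
        \<le> cmod (char \<nu> ((real k - real l) * (T / N))) ^ card J"
      unfolding S_def by (rule integral_cos_sum_le_norm_char_pow[OF assms(1-4)])
  qed simp
  finally show ?thesis by (simp add: S_def)
qed

lemma measure_small_ball_sum_le_off_diagonal:
  fixes W :: "'i \<Rightarrow> 'a \<Rightarrow> real" and N :: nat and T b c :: real
  assumes "prob_space M" and "prob_space.indep_vars M (\<lambda>_. borel) W J"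
    and "finite J" and "\<And>j. j \<in> J \<Longrightarrow> distr M borel (W j) = \<nu>"
    and "real_distribution \<nu>" and "N \<ge> 1" "T > 0" "b \<ge> 0"
    and off_diagonal: "\<And>k l. k < N \<Longrightarrow> l < N \<Longrightarrow> k \<noteq> l \<Longrightarrow>
      cmod (char \<nu> ((real k - real l) * (T / N))) ^ card J \<le> b"
  shows "measure M {\<omega>\<in>space M. \<bar>(\<Sum>j\<in>J. W j \<omega>) - c\<bar> \<le> 1/T} \<le> 1 / (N * cos 1 ^ 2) + b / cos 1 ^ 2"
proof -
  have "cos (1::real) > 0" using pi_gt3 by (intro cos_gt_zero) auto
  have "measure M {\<omega>\<in>space M. \<bar>(\<Sum>j\<in>J. W j \<omega>) - c\<bar> \<le> 1/T}
      \<le> (\<Sum>k<N. \<Sum>l<N. cmod (char \<nu> ((real k - real l) * (T / N))) ^ card J) / (real N * cos 1)^2"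
    using assms(1-4,6,7) by (rule measure_small_ball_sum_le_char)
  also have "\<dots> \<le> (\<Sum>k<N. \<Sum>l<N. of_bool (k = l) + b) / (real N * cos 1)^2"
    using off_diagonal \<open>b \<ge> 0\<close> real_distribution.char_zero[OF \<open>real_distribution \<nu>\<close>]
    by (intro divide_right_mono sum_mono) auto
  also have "(\<Sum>k<N. \<Sum>l<N. of_bool (k = l) + b) = N + N * N * b"
    by (simp add: sum.distrib algebra_simps)
  also have "\<dots> / (real N * cos 1)^2 = 1 / (N * cos 1 ^ 2) + b / cos 1 ^ 2"
    using \<open>N \<ge> 1\<close> \<open>cos 1 > 0\<close> by (simp add: field_simps power2_eq_square)
  finally show ?thesis .
qed

lemma eventually_off_diagonal_norm_char_pow_le:
  fixes N :: nat and T b :: real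
  assumes "T > 0" and char_less_1: "\<And>u. u \<noteq> 0 \<Longrightarrow> \<bar>u\<bar> \<le> T \<Longrightarrow> cmod (char \<nu> u) < 1" and "b > 0"
  shows "\<forall>\<^sub>F m in sequentially. \<forall>k\<in>{..<N}. \<forall>l\<in>{..<N}.
    k \<noteq> l \<longrightarrow> cmod (char \<nu> ((real k - real l) * (T / N))) ^ m \<le> b"
proof (intro eventually_ball_finite finite_lessThan ballI)
  fix k l assume "k \<in> {..<N}" "l \<in> {..<N}"
  show "\<forall>\<^sub>F m in sequentially. k \<noteq> l \<longrightarrow> cmod (char \<nu> ((real k - real l) * (T / N))) ^ m \<le> b"
  proof (cases "k = l")
    case False
    have "\<bar>real k - real l\<bar> \<le> real N" using \<open>k \<in> {..<N}\<close> \<open>l \<in> {..<N}\<close> by auto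
    then have "\<bar>(real k - real l) * (T / N)\<bar> \<le> T"
      using \<open>T > 0\<close> \<open>k \<in> {..<N}\<close> by (simp add: abs_mult divide_le_eq mult_right_mono mult.commute)
    then have "cmod (char \<nu> ((real k - real l) * (T / N))) < 1"
      using False \<open>T > 0\<close> \<open>k \<in> {..<N}\<close> by (intro char_less_1) auto
    then have "(\<lambda>m. cmod (char \<nu> ((real k - real l) * (T / N))) ^ m) \<longlonglongrightarrow> 0"
      by (intro LIMSEQ_power_zero) auto
    then have "\<forall>\<^sub>F m in sequentially. cmod (char \<nu> ((real k - real l) * (T / N))) ^ m < b"
      using \<open>b > 0\<close> by (intro order_tendstoD)
    then show ?thesis by (auto elim: eventually_mono)
  qed simp
qed

lemma sum_iid_anti_concentration:
  fixes W :: "'i \<Rightarrow> 'a \<Rightarrow> real"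
  assumes "prob_space M" and indep: "prob_space.indep_vars M (\<lambda>_. borel) W UNIV"
    and law: "\<And>j. distr M borel (W j) = \<nu>" and not_dirac: "\<And>a. \<nu> \<noteq> return borel a"
  shows "\<exists>\<delta>>0. \<forall>\<eta>>0. \<exists>m. \<forall>J c. finite J \<longrightarrow> m \<le> card J \<longrightarrow>
           measure M {\<omega>\<in>space M. \<bar>(\<Sum>j\<in>J. W j \<omega>) - c\<bar> \<le> \<delta>} \<le> \<eta>"
proof -
  interpret prob_space M by fact
  have "real_distribution \<nu>"
    using real_distribution_distr[of "W undefined"] indep law by (auto simp: indep_vars_def)
  then obtain r R where "R > 0" and pos: "measure \<nu> {r-R<..r} > 0" "measure \<nu> {r<..r+R} > 0"
    using ex_adjacent_intervals_measure_pos cdf_strictly_between_if_not_return[OF _ not_dirac] by metis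
  define T where "T = pi / (2 * R)"
  have "T > 0" using \<open>R > 0\<close> by (simp add: T_def)
  have char_less_1: "cmod (char \<nu> u) < 1" if "u \<noteq> 0" "\<bar>u\<bar> \<le> T" for u
    using norm_char_less_1_near_0[OF \<open>real_distribution \<nu>\<close> \<open>R > 0\<close> pos that(1)] that(2)
    by (simp add: T_def)
  have "cos (1::real) > 0" using pi_gt3 by (intro cos_gt_zero) auto
  have "\<exists>m. \<forall>J c. finite J \<longrightarrow> m \<le> card J \<longrightarrow>
      measure M {\<omega>\<in>space M. \<bar>(\<Sum>j\<in>J. W j \<omega>) - c\<bar> \<le> 1/T} \<le> \<eta>" if "\<eta> > 0" for \<eta>
  proof -
    obtain N :: nat where N: "N \<ge> 1" "2 / (\<eta> * cos 1 ^ 2) \<le> N"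
      using real_arch_simple[of "max 1 (2 / (\<eta> * cos 1 ^ 2))"] by force
    then have N_large: "1 / (N * cos 1 ^ 2) \<le> \<eta> / 2"
      using \<open>\<eta> > 0\<close> \<open>cos 1 > 0\<close> by (simp add: field_simps)
    obtain m where m: "\<And>m' k l. m \<le> m' \<Longrightarrow> k < N \<Longrightarrow> l < N \<Longrightarrow> k \<noteq> l \<Longrightarrow>
        cmod (char \<nu> ((real k - real l) * (T / N))) ^ m' \<le> \<eta> * cos 1 ^ 2 / 2"
      using eventually_off_diagonal_norm_char_pow_le[OF \<open>T > 0\<close> char_less_1, of "\<eta> * cos 1 ^ 2 / 2" N]
        \<open>\<eta> > 0\<close> \<open>cos 1 > 0\<close> by (auto simp: eventually_sequentially)
    show ?thesis
    proof (intro exI[of _ m] allI impI)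
      fix J :: "'i set" and c :: real assume J: "finite J" "m \<le> card J"
      have "measure M {\<omega>\<in>space M. \<bar>(\<Sum>j\<in>J. W j \<omega>) - c\<bar> \<le> 1/T}
          \<le> 1 / (N * cos 1 ^ 2) + \<eta> * cos 1 ^ 2 / 2 / cos 1 ^ 2"
        using m[OF J(2)] \<open>\<eta> > 0\<close>
        by (intro measure_small_ball_sum_le_off_diagonal[OF \<open>prob_space M\<close> indep_vars_subset[OF indep]
            J(1) law \<open>real_distribution \<nu>\<close> N(1) \<open>T > 0\<close>]) auto
      also have "\<dots> \<le> \<eta>"
        using N_large \<open>cos 1 > 0\<close> by simp
      finally show "measure M {\<omega>\<in>space M. \<bar>(\<Sum>j\<in>J. W j \<omega>) - c\<bar> \<le> 1/T} \<le> \<eta>" .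
    qed
  qed
  then show ?thesis using \<open>T > 0\<close> by (intro exI[of _ "1/T"]) auto
qed

lemma sum_iid_small_ball_tendsto_0:
  fixes W :: "'i \<Rightarrow> 'a \<Rightarrow> real"
  assumes "prob_space M" and "prob_space.indep_vars M (\<lambda>_. borel) W UNIV"
    and "\<And>j. distr M borel (W j) = \<nu>" and "\<And>a. \<nu> \<noteq> return borel a"
  shows "\<exists>\<delta>>0. \<forall>J c. (\<forall>n. finite (J n)) \<longrightarrow> filterlim (\<lambda>n. card (J n)) at_top sequentially \<longrightarrow>
    (\<lambda>n. measure M {\<omega>\<in>space M. \<bar>(\<Sum>j\<in>J n. W j \<omega>) - c n\<bar> \<le> \<delta>}) \<longlonglongrightarrow> 0"
proof -
  obtain \<delta> where "\<delta> > 0" and anti_conc: "\<And>\<eta>. \<eta> > 0 \<Longrightarrow> \<exists>m. \<forall>J c. finite J \<longrightarrow> m \<le> card J \<longrightarrow>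
      measure M {\<omega>\<in>space M. \<bar>(\<Sum>j\<in>J. W j \<omega>) - c\<bar> \<le> \<delta>} \<le> \<eta>"
    using sum_iid_anti_concentration[OF assms] by blast
  have "(\<lambda>n. measure M {\<omega>\<in>space M. \<bar>(\<Sum>j\<in>J n. W j \<omega>) - c n\<bar> \<le> \<delta>}) \<longlonglongrightarrow> 0"
    if "\<forall>n. finite (J n)" "filterlim (\<lambda>n. card (J n)) at_top sequentially" for J c
  proof (rule order_tendstoI)
    fix \<eta> :: real assume "\<eta> > 0"
    then obtain m where m: "\<And>J c. finite J \<Longrightarrow> m \<le> card J \<Longrightarrow>
        measure M {\<omega>\<in>space M. \<bar>(\<Sum>j\<in>J. W j \<omega>) - c\<bar> \<le> \<delta>} \<le> \<eta> / 2"
      using anti_conc[of "\<eta> / 2"] by auto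
    have "\<forall>\<^sub>F n in sequentially. m \<le> card (J n)"
      using that(2) by (simp add: filterlim_at_top)
    then show "\<forall>\<^sub>F n in sequentially. measure M {\<omega>\<in>space M. \<bar>(\<Sum>j\<in>J n. W j \<omega>) - c n\<bar> \<le> \<delta>} < \<eta>"
    proof eventually_elim
      case (elim n)
      with m[of "J n" "c n"] that(1) have "measure M {\<omega>\<in>space M. \<bar>(\<Sum>j\<in>J n. W j \<omega>) - c n\<bar> \<le> \<delta>} \<le> \<eta> / 2"
        by blast
      then show ?case using \<open>\<eta> > 0\<close> by linarith
    qed
  qed (intro always_eventually allI less_le_trans[OF _ measure_nonneg])
  with \<open>\<delta> > 0\<close> show ?thesis by blast
qed

section \<open>Small balls around almost every point\<close>

lemma
  fixes \<mu> :: "'a::euclidean_space measure"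
  assumes "finite_measure \<mu>" and sets_\<mu>[measurable_cong]: "sets \<mu> = sets borel"
  shows borel_measurable_emeasure_ball: "(\<lambda>z. emeasure \<mu> (ball z \<rho>)) \<in> borel_measurable lborel"
    and nn_integral_emeasure_ball: "\<rho> \<ge> 0 \<Longrightarrow> (\<integral>\<^sup>+ z. emeasure \<mu> (ball z \<rho>) \<partial>lborel)
      = ennreal (unit_ball_vol DIM('a) * \<rho> ^ DIM('a)) * emeasure \<mu> (space \<mu>)"
proof -
  interpret finite_measure \<mu> by fact
  note sigma_finite_\<mu> = sigma_finite_measure_axioms
  interpret pair_sigma_finite lborel \<mu> ..
  have ball_pair: "(\<lambda>(z, x). indicator (ball z \<rho>) x :: ennreal) \<in> borel_measurable (lborel \<Otimes>\<^sub>M \<mu>)"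
  proof -
    have "(\<lambda>(z, x). indicator (ball z \<rho>) x :: ennreal) = (\<lambda>p. if dist (fst p) (snd p) < \<rho> then 1 else 0)"
      by (auto simp: fun_eq_iff indicator_def)
    also have "\<dots> \<in> borel_measurable (lborel \<Otimes>\<^sub>M \<mu>)" by measurable
    finally show ?thesis .
  qed
  have ball_integral: "emeasure \<mu> (ball z \<rho>) = (\<integral>\<^sup>+ x. indicator (ball z \<rho>) x \<partial>\<mu>)" for z
    by (simp add: sets_\<mu>)
  show "(\<lambda>z. emeasure \<mu> (ball z \<rho>)) \<in> borel_measurable lborel"
    unfolding ball_integral using sigma_finite_measure.borel_measurable_nn_integral[OF sigma_finite_\<mu> ball_pair] by simp
  assume "\<rho> \<ge> 0"
  have "(\<integral>\<^sup>+ z. emeasure \<mu> (ball z \<rho>) \<partial>lborel) = (\<integral>\<^sup>+ x. \<integral>\<^sup>+ z. indicator (ball z \<rho>) x \<partial>lborel \<partial>\<mu>)"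
    unfolding ball_integral using Fubini'[OF ball_pair] by simp
  also have "\<dots> = (\<integral>\<^sup>+ x. emeasure lborel (ball x \<rho>) \<partial>\<mu>)"
  proof (intro nn_integral_cong)
    fix x :: 'a
    have "(\<lambda>z. indicator (ball z \<rho>) x :: ennreal) = indicator (ball x \<rho>)"
      by (auto simp: fun_eq_iff indicator_def dist_commute)
    then show "(\<integral>\<^sup>+ z. indicator (ball z \<rho>) x \<partial>lborel) = emeasure lborel (ball x \<rho>)" by simp
  qed
  also have "\<dots> = ennreal (unit_ball_vol DIM('a) * \<rho> ^ DIM('a)) * emeasure \<mu> (space \<mu>)"
    using \<open>\<rho> \<ge> 0\<close> by (simp add: emeasure_ball nn_integral_const)
  finally show "(\<integral>\<^sup>+ z. emeasure \<mu> (ball z \<rho>) \<partial>lborel)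
      = ennreal (unit_ball_vol DIM('a) * \<rho> ^ DIM('a)) * emeasure \<mu> (space \<mu>)" .
qed

lemma AE_summable_measure_ball:
  fixes \<mu> :: "'a::euclidean_space measure" and w r :: "nat \<Rightarrow> real"
  assumes "finite_measure \<mu>" "sets \<mu> = sets borel"
    and "\<And>n. w n \<ge> 0" "\<And>n. r n \<ge> 0" and "summable (\<lambda>n. w n * r n ^ DIM('a))"
  shows "AE z in lborel. summable (\<lambda>n. w n * measure \<mu> (ball z (r n)))"
proof -
  interpret finite_measure \<mu> by fact
  define g where "g z = (\<Sum>n. ennreal (w n) * emeasure \<mu> (ball z (r n)))" for z
  have term_measurable: "(\<lambda>z. ennreal (w n) * emeasure \<mu> (ball z (r n))) \<in> borel_measurable lborel" for n
    using borel_measurable_emeasure_ball[OF assms(1,2)] by measurable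
  have "(\<integral>\<^sup>+ z. g z \<partial>lborel) = (\<Sum>n. ennreal (w n) * \<integral>\<^sup>+ z. emeasure \<mu> (ball z (r n)) \<partial>lborel)"
    unfolding g_def using term_measurable borel_measurable_emeasure_ball[OF assms(1,2)]
    by (simp add: nn_integral_suminf nn_integral_cmult)
  also have "\<dots> = (\<Sum>n. ennreal (w n * r n ^ DIM('a) * (unit_ball_vol DIM('a) * measure \<mu> (space \<mu>))))"
    unfolding nn_integral_emeasure_ball[OF assms(1,2) assms(4)]
    using assms(3,4) by (simp add: emeasure_eq_measure ennreal_mult[symmetric] mult_ac)
  also have "\<dots> < \<infinity>"
    using assms(3-5) by (subst suminf_ennreal2) (auto intro: summable_mult2)
  finally have "AE z in lborel. g z \<noteq> \<infinity>"
    using term_measurable by (intro nn_integral_PInf_AE) (auto simp: g_def)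
  then show ?thesis
  proof (rule AE_mp, intro AE_I2 impI)
    fix z assume "g z \<noteq> \<infinity>"
    moreover have "g z = (\<Sum>n. ennreal (w n * measure \<mu> (ball z (r n))))"
      using assms(3) by (simp add: g_def emeasure_eq_measure ennreal_mult)
    ultimately show "summable (\<lambda>n. w n * measure \<mu> (ball z (r n)))"
      using assms(3) by (intro summable_suminf_not_top) auto
  qed
qed

lemma measure_ex_in_le_card:
  assumes "prob_space M" and "\<And>j. j \<in> J \<Longrightarrow> X j \<in> borel_measurable M"
    and law: "\<And>j. j \<in> J \<Longrightarrow> distr M borel (X j) = \<mu>" and "finite J" "S \<in> sets borel"
  shows "measure M {\<omega>\<in>space M. \<exists>j\<in>J. X j \<omega> \<in> S} \<le> card J * measure \<mu> S"
proof -
  interpret prob_space M by fact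
  have "measure M {\<omega>\<in>space M. \<exists>j\<in>J. X j \<omega> \<in> S} = measure M (\<Union>j\<in>J. X j -` S \<inter> space M)"
    by (rule arg_cong[where f="measure M"]) auto
  also have "\<dots> \<le> (\<Sum>j\<in>J. measure M (X j -` S \<inter> space M))"
    using assms(2,4,5) by (intro finite_measure_subadditive_finite) (auto intro: measurable_sets)
  also have "\<dots> = (\<Sum>j\<in>J. measure \<mu> S)"
    using assms(2,5) by (intro sum.cong refl) (simp add: law[symmetric] measure_distr)
  finally show ?thesis by simp
qed

lemma measure_ex_in_ball_tendsto_0:
  fixes X :: "nat \<Rightarrow> 'a \<Rightarrow> 'b::metric_space"
  assumes "prob_space M" and "\<And>j. X j \<in> borel_measurable M" and law: "\<And>j. distr M borel (X j) = \<mu>"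
    and "\<And>n. finite (J n)" "\<And>n. card (J n) \<le> Suc n"
    and balls: "(\<lambda>n. real (Suc n) * measure \<mu> (ball z (r n))) \<longlonglongrightarrow> 0"
  shows "(\<lambda>n. measure M {\<omega>\<in>space M. \<exists>j\<in>J n. X j \<omega> \<in> ball z (r n)}) \<longlonglongrightarrow> 0"
proof (rule tendsto_sandwich[OF _ _ tendsto_const balls])
  have "measure M {\<omega>\<in>space M. \<exists>j\<in>J n. X j \<omega> \<in> ball z (r n)} \<le> real (Suc n) * measure \<mu> (ball z (r n))"
    for n
  proof -
    have "measure M {\<omega>\<in>space M. \<exists>j\<in>J n. X j \<omega> \<in> ball z (r n)}
        \<le> real (card (J n)) * measure \<mu> (ball z (r n))"
      using assms(1,2,4) law by (intro measure_ex_in_le_card) auto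
    also have "\<dots> \<le> real (Suc n) * measure \<mu> (ball z (r n))"
      using assms(5)[of n] by (intro mult_right_mono) (simp_all only: of_nat_le_iff measure_nonneg)
    finally show ?thesis .
  qed
  then show "\<forall>\<^sub>F n in sequentially.
      measure M {\<omega>\<in>space M. \<exists>j\<in>J n. X j \<omega> \<in> ball z (r n)} \<le> real (Suc n) * measure \<mu> (ball z (r n))"
    by simp
qed simp

section \<open>The logarithmic derivative\<close>

lemma log_minus_less_imp_inverse_le_exp:
  assumes "log_minus d < ereal t" "d \<ge> 0"
  shows "d > 0 \<and> 1 / d \<le> exp t"
proof -
  have "d > 0" using assms by (auto simp: log_minus_def split: if_splits)
  moreover have "1 / d \<le> exp t"
  proof (cases "d \<le> 1")
    case True
    then have "ln (1 / d) \<le> t" using assms \<open>d > 0\<close> by (simp add: log_minus_def ln_div)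
    then show ?thesis using \<open>d > 0\<close> by (metis exp_le_cancel_iff exp_ln divide_pos_pos zero_less_one)
  next
    case False
    then have "t \<ge> 0" using assms by (auto simp: log_minus_def)
    then show ?thesis using False by (smt (verit) one_le_exp_iff divide_le_eq_1)
  qed
  ultimately show ?thesis ..
qed

lemma eventually_log_minus_less:
  assumes "\<And>n. finite (A n)"
    and "limsup (\<lambda>n. ereal (1 / real n) * (\<Sum>l\<in>A n. log_minus (d n l))) < ereal e"
  shows "\<forall>\<^sub>F n in sequentially. \<forall>l\<in>A n. log_minus (d n l) < ereal (e * n)"
  using Limsup_lessD[OF assms(2)] eventually_gt_at_top[of 0]
proof eventually_elim
  case (elim n)
  define S where "S = (\<Sum>l\<in>A n. log_minus (d n l))"
  have "S \<ge> 0" unfolding S_def by (intro sum_nonneg) (simp add: log_minus_def)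
  have "S < ereal (e * n)"
  proof (cases S)
    case (real s)
    then show ?thesis using elim by (simp add: S_def field_simps)
  qed (use elim \<open>S \<ge> 0\<close> in \<open>auto simp: S_def\<close>)
  moreover have "log_minus (d n l) \<le> S" if "l \<in> A n" for l
  proof -
    have "S = log_minus (d n l) + (\<Sum>l'\<in>A n - {l}. log_minus (d n l'))"
      unfolding S_def using that assms(1) by (simp add: sum.remove)
    moreover have "(\<Sum>l'\<in>A n - {l}. log_minus (d n l')) \<ge> 0"
      by (intro sum_nonneg) (simp add: log_minus_def)
    ultimately show ?thesis by (simp add: add_increasing2)
  qed
  ultimately show ?case by (meson le_less_trans)
qed

lemma abs_ln_div_less:
  fixes a e n :: real
  assumes "n > 0" "exp (- (e * n)) < a" "a < exp (e * n)"
  shows "\<bar>ln a / n\<bar> < e"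
proof -
  have "a > 0" using assms(2) exp_gt_zero[of "- (e * n)"] by linarith
  then have "- (e * n) < ln a" "ln a < e * n"
    using ln_less_cancel_iff[of "exp (- (e * n))" a] ln_less_cancel_iff[of a "exp (e * n)"] assms(2,3)
    by simp_all
  then have "\<bar>ln a\<bar> < e * n" by linarith
  then show ?thesis using assms(1) by (simp add: abs_divide pos_divide_less_eq)
qed

lemma filterlim_diff_at_top_if_ratio_tendsto_0:
  fixes k :: "nat \<Rightarrow> nat"
  assumes "(\<lambda>n. real (k n) / real n) \<longlonglongrightarrow> 0"
  shows "filterlim (\<lambda>n. n - k n) at_top sequentially"
proof -
  have "\<forall>\<^sub>F n in sequentially. real (k n) / real n < 1/2"
    using assms by (rule order_tendstoD) simp
  then have half_le: "\<forall>\<^sub>F n in sequentially. real n / 2 \<le> real (n - k n)"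
    using eventually_gt_at_top[of 0] by eventually_elim (simp add: field_simps of_nat_diff)
  have "filterlim (\<lambda>n. real n / 2) at_top sequentially" by real_asymp
  from filterlim_at_top_mono[OF this half_le] show ?thesis
    by (simp add: filterlim_sequentially_iff_filterlim_real)
qed

lemma norm_Ln_fun_le:
  assumes "\<And>j. j \<in> {1..n - k n} \<Longrightarrow> cmod (1 / (z - x j)) \<le> B"
    and "\<And>l. l \<in> {1..k n} \<Longrightarrow> cmod (1 / (z - \<xi> n l)) \<le> C"
  shows "cmod (Ln_fun k \<xi> x n z) \<le> real (n - k n) * B + real (k n) * C"
proof -
  have "cmod (Ln_fun k \<xi> x n z)
      \<le> (\<Sum>j\<in>{1..n - k n}. cmod (1 / (z - x j))) + (\<Sum>l\<in>{1..k n}. cmod (1 / (z - \<xi> n l)))"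
    unfolding Ln_fun_def by (intro order.trans[OF norm_triangle_ineq] add_mono norm_sum)
  also have "\<dots> \<le> real (n - k n) * B + real (k n) * C"
    using sum_bounded_above[of "{1..n - k n}", OF assms(1)]
      sum_bounded_above[of "{1..k n}", OF assms(2)] by (intro add_mono) auto
  finally show ?thesis .
qed

lemma abs_ln_norm_Ln_fun_less:
  fixes x :: "nat \<Rightarrow> complex"
  assumes "n > 0" "k n \<le> n" "cmod u = 1"
    and x_far: "\<And>j. j \<in> {1..n - k n} \<Longrightarrow> 1 / real (Suc n)^2 \<le> cmod (z - x j)"
    and \<xi>_far: "\<And>l. l \<in> {1..k n} \<Longrightarrow> log_minus (cmod (z - \<xi> n l)) < ereal (\<epsilon> / 4 * n)"
    and upper: "real n * real (Suc n)^2 + real n * exp (\<epsilon> / 4 * n) < exp (\<epsilon> * n)"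
    and lower: "exp (- (\<epsilon> * n)) < \<delta>" "\<delta> < \<bar>Re (cnj u * Ln_fun k \<xi> x n z)\<bar>"
  shows "(\<forall>j\<in>{1..n - k n}. x j \<noteq> z) \<and> (\<forall>l\<in>{1..k n}. \<xi> n l \<noteq> z) \<and>
    Ln_fun k \<xi> x n z \<noteq> 0 \<and> \<bar>ln (cmod (Ln_fun k \<xi> x n z)) / n\<bar> < \<epsilon>"
proof -
  define L where "L = Ln_fun k \<xi> x n z"
  have x_bound: "x j \<noteq> z \<and> cmod (1 / (z - x j)) \<le> real (Suc n)^2" if "j \<in> {1..n - k n}" for j
  proof -
    have pos: "0 < 1 / real (Suc n)^2" by simp
    then have "x j \<noteq> z" using x_far[OF that] by auto
    moreover have "inverse (cmod (z - x j)) \<le> inverse (1 / real (Suc n)^2)"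
      by (rule le_imp_inverse_le[OF x_far[OF that] pos])
    ultimately show ?thesis by (simp add: norm_inverse divide_inverse)
  qed
  have \<xi>_bound: "\<xi> n l \<noteq> z \<and> cmod (1 / (z - \<xi> n l)) \<le> exp (\<epsilon> / 4 * n)" if "l \<in> {1..k n}" for l
    using log_minus_less_imp_inverse_le_exp[OF \<xi>_far[OF that]] by (auto simp: norm_divide)
  have "cmod L \<le> real (n - k n) * real (Suc n)^2 + real (k n) * exp (\<epsilon> / 4 * n)"
    unfolding L_def using x_bound \<xi>_bound by (intro norm_Ln_fun_le) auto
  also have "\<dots> \<le> real n * real (Suc n)^2 + real n * exp (\<epsilon> / 4 * n)"
    using \<open>k n \<le> n\<close> by (intro add_mono mult_right_mono) auto
  finally have "cmod L < exp (\<epsilon> * n)" using upper by linarith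
  moreover have "\<delta> < cmod L"
    using lower(2) abs_Re_le_cmod[of "cnj u * L"] \<open>cmod u = 1\<close> by (simp add: L_def norm_mult)
  ultimately have "\<bar>ln (cmod L) / n\<bar> < \<epsilon>"
    using \<open>n > 0\<close> lower(1) by (intro abs_ln_div_less) auto
  moreover have "L \<noteq> 0" using \<open>\<delta> < cmod L\<close> lower(1) by (smt (verit) exp_gt_zero norm_zero)
  ultimately show ?thesis using x_bound \<xi>_bound by (auto simp: L_def)
qed

lemma eventually_abs_ln_norm_Ln_fun_less:
  fixes \<epsilon> \<delta> :: real
  assumes k_le: "\<And>n. k n \<le> n"
    and \<xi>_far: "limsup (\<lambda>n. ereal (1 / real n) * (\<Sum>l\<in>{1..k n}. log_minus (cmod (z - \<xi> n l)))) = 0"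
    and "\<epsilon> > 0" "\<delta> > 0" "cmod u = 1"
  shows "\<forall>\<^sub>F n in sequentially. \<forall>x.
    (\<forall>j\<in>{1..n - k n}. 1 / real (Suc n)^2 \<le> cmod (z - x j)) \<longrightarrow>
    \<delta> < \<bar>Re (cnj u * Ln_fun k \<xi> x n z)\<bar> \<longrightarrow>
    (\<forall>j\<in>{1..n - k n}. x j \<noteq> z) \<and> (\<forall>l\<in>{1..k n}. \<xi> n l \<noteq> z) \<and>
    Ln_fun k \<xi> x n z \<noteq> 0 \<and> \<bar>ln (cmod (Ln_fun k \<xi> x n z)) / n\<bar> < \<epsilon>"
proof -
  have "limsup (\<lambda>n. ereal (1 / real n) * (\<Sum>l\<in>{1..k n}. log_minus (cmod (z - \<xi> n l))))
      < ereal (\<epsilon> / 4)"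
    using \<xi>_far \<open>\<epsilon> > 0\<close> by simp
  then have "\<forall>\<^sub>F n in sequentially. \<forall>l\<in>{1..k n}. log_minus (cmod (z - \<xi> n l)) < ereal (\<epsilon> / 4 * n)"
    by (rule eventually_log_minus_less[rotated]) simp
  moreover have "\<forall>\<^sub>F n in sequentially. real n * real (Suc n)^2 + real n * exp (\<epsilon> / 4 * n) < exp (\<epsilon> * n)"
    using \<open>\<epsilon> > 0\<close> by real_asymp
  moreover have "\<forall>\<^sub>F n in sequentially. exp (- (\<epsilon> * n)) < \<delta>"
    using \<open>\<epsilon> > 0\<close> \<open>\<delta> > 0\<close> by real_asymp
  ultimately show ?thesis
    using eventually_gt_at_top[of 0]
  proof eventually_elim
    case (elim n)
    show ?case
      by (intro allI impI abs_ln_norm_Ln_fun_less[where n=n and k=k and \<xi>=\<xi> and z=z,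
            OF \<open>n > 0\<close> k_le \<open>cmod u = 1\<close> _ elim(1)[rule_format] elim(2,3)]) auto
  qed
qed

lemma ex_direction_Re_inverse_iid_not_return:
  fixes M :: "'a measure" and \<mu> :: "complex measure" and X :: "'i \<Rightarrow> 'a \<Rightarrow> complex"
  assumes "prob_space M" and "prob_space \<mu>" and not_dirac: "\<And>c. \<mu> \<noteq> return borel c"
    and indep: "prob_space.indep_vars M (\<lambda>_. borel) X UNIV"
    and law: "\<And>j. distr M borel (X j) = \<mu>"
  shows "\<exists>u \<nu>. cmod u = 1 \<and>
    prob_space.indep_vars M (\<lambda>_. borel) (\<lambda>j \<omega>. Re (cnj u * (1 / (z - X j \<omega>)))) UNIV \<and>
    (\<forall>j. distr M borel (\<lambda>\<omega>. Re (cnj u * (1 / (z - X j \<omega>)))) = \<nu>) \<and> (\<forall>a. \<nu> \<noteq> return borel a)"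
proof -
  interpret P: prob_space M by fact
  have [measurable]: "X j \<in> borel_measurable M" for j
    using indep by (auto simp: P.indep_vars_def)
  have sets_\<mu>: "sets \<mu> = sets borel" using law[of undefined] by (metis sets_distr)
  define \<nu> where "\<nu> = distr \<mu> borel (\<lambda>x. 1 / (z - x))"
  have "prob_space \<nu>" "sets \<nu> = sets borel"
    unfolding \<nu>_def using \<open>prob_space \<mu>\<close> sets_\<mu> by (auto intro!: prob_space.prob_space_distr)
  moreover have "\<nu> \<noteq> return borel a" for a
    \<comment> \<open>the left inverse also works at \<open>x = z\<close>, since \<open>1 / 0 = 0\<close>\<close>
    unfolding \<nu>_def using \<open>prob_space \<mu>\<close> sets_\<mu> not_dirac
    by (rule distr_not_return_if_left_inverse[where g="\<lambda>w. z - 1 / w"]) auto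
  ultimately obtain u where "cmod u = 1"
    and "\<And>a. distr \<nu> borel (\<lambda>w. Re (cnj u * w)) \<noteq> return borel a"
    using ex_direction_distr_not_return by blast
  moreover have "P.indep_vars (\<lambda>_. borel) (\<lambda>j \<omega>. Re (cnj u * (1 / (z - X j \<omega>)))) UNIV"
    by (rule P.indep_vars_compose2[OF indep]) simp
  moreover have "distr M borel (\<lambda>\<omega>. Re (cnj u * (1 / (z - X j \<omega>)))) = distr \<nu> borel (\<lambda>w. Re (cnj u * w))" for j
  proof -
    have "distr \<nu> borel (\<lambda>w. Re (cnj u * w))
        = distr M borel ((\<lambda>w. Re (cnj u * w)) \<circ> ((\<lambda>x. 1 / (z - x)) \<circ> X j))"
      unfolding \<nu>_def law[of j, symmetric] by (simp add: distr_distr)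
    then show ?thesis by (simp only: comp_def)
  qed
  ultimately show ?thesis by blast
qed

lemma Ln_fun_anti_concentration:
  fixes M :: "'a measure" and \<mu> :: "complex measure" and X :: "nat \<Rightarrow> 'a \<Rightarrow> complex"
  assumes "prob_space M" and "prob_space \<mu>" and "\<And>c. \<mu> \<noteq> return borel c"
    and "prob_space.indep_vars M (\<lambda>_. borel) X UNIV" and "\<And>j. distr M borel (X j) = \<mu>"
    and k_small: "(\<lambda>n. real (k n) / real n) \<longlonglongrightarrow> 0"
  shows "\<exists>u \<delta>. cmod u = 1 \<and> \<delta> > 0 \<and>
    (\<lambda>n. measure M {\<omega>\<in>space M. \<bar>Re (cnj u * Ln_fun k \<xi> (\<lambda>j. X j \<omega>) n z)\<bar> \<le> \<delta>}) \<longlonglongrightarrow> 0"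
proof -
  obtain u \<nu> where "cmod u = 1"
    and iid: "prob_space.indep_vars M (\<lambda>_. borel) (\<lambda>j \<omega>. Re (cnj u * (1 / (z - X j \<omega>)))) UNIV"
      "\<And>j. distr M borel (\<lambda>\<omega>. Re (cnj u * (1 / (z - X j \<omega>)))) = \<nu>" "\<And>a. \<nu> \<noteq> return borel a"
    using ex_direction_Re_inverse_iid_not_return[OF assms(1-5)] by blast
  obtain \<delta> where "\<delta> > 0" and small_ball: "\<And>J c. \<forall>n. finite (J n) \<Longrightarrow>
      filterlim (\<lambda>n. card (J n)) at_top sequentially \<Longrightarrow>
      (\<lambda>n. measure M {\<omega>\<in>space M. \<bar>(\<Sum>j\<in>J n. Re (cnj u * (1 / (z - X j \<omega>)))) - c n\<bar> \<le> \<delta>}) \<longlonglongrightarrow> 0"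
    using sum_iid_small_ball_tendsto_0[OF \<open>prob_space M\<close> iid] by blast
  have Re_Ln_fun: "Re (cnj u * Ln_fun k \<xi> (\<lambda>j. X j \<omega>) n z)
      = (\<Sum>j\<in>{1..n - k n}. Re (cnj u * (1 / (z - X j \<omega>)))) - (- Re (cnj u * (\<Sum>l\<in>{1..k n}. 1 / (z - \<xi> n l))))"
    for n \<omega> by (simp add: Ln_fun_def distrib_left sum_distrib_left Re_sum)
  have "filterlim (\<lambda>n. card {1..n - k n}) at_top sequentially"
    using filterlim_diff_at_top_if_ratio_tendsto_0[OF k_small] by simp
  then have "(\<lambda>n. measure M {\<omega>\<in>space M. \<bar>Re (cnj u * Ln_fun k \<xi> (\<lambda>j. X j \<omega>) n z)\<bar> \<le> \<delta>}) \<longlonglongrightarrow> 0"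
    unfolding Re_Ln_fun by (intro small_ball) auto
  with \<open>cmod u = 1\<close> \<open>\<delta> > 0\<close> show ?thesis by blast
qed

lemma measure_log_Ln_fun_large_tendsto_0:
  fixes M :: "'a measure" and \<mu> :: "complex measure" and X :: "nat \<Rightarrow> 'a \<Rightarrow> complex"
  assumes "prob_space M" and "prob_space \<mu>" and not_dirac: "\<And>c. \<mu> \<noteq> return borel c"
    and indep: "prob_space.indep_vars M (\<lambda>_. borel) X UNIV"
    and law: "\<And>j. distr M borel (X j) = \<mu>"
    and k_le: "\<And>n. k n \<le> n" and k_small: "(\<lambda>n. real (k n) / real n) \<longlonglongrightarrow> 0"
    and balls: "(\<lambda>n. real (Suc n) * measure \<mu> (ball z (1 / real (Suc n)^2))) \<longlonglongrightarrow> 0"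
    and \<xi>_far: "limsup (\<lambda>n. ereal (1 / real n) * (\<Sum>l\<in>{1..k n}. log_minus (cmod (z - \<xi> n l)))) = 0"
    and "\<epsilon> > 0"
  shows "(\<lambda>n. measure M {\<omega> \<in> space M.
          (\<exists>j\<in>{1..n - k n}. X j \<omega> = z) \<or> (\<exists>l\<in>{1..k n}. \<xi> n l = z) \<or>
          Ln_fun k \<xi> (\<lambda>j. X j \<omega>) n z = 0 \<or>
          \<bar>ln (cmod (Ln_fun k \<xi> (\<lambda>j. X j \<omega>) n z)) / real n\<bar> > \<epsilon>}) \<longlonglongrightarrow> 0"
    (is "(\<lambda>n. measure M (?bad n)) \<longlonglongrightarrow> 0")
proof -
  interpret P: prob_space M by fact
  have [measurable]: "X j \<in> borel_measurable M" for j
    using indep by (auto simp: P.indep_vars_def)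
  have [measurable]: "(\<lambda>x. 1 / (z - x)) \<in> borel_measurable borel" by simp
  obtain u \<delta> where "cmod u = 1" "\<delta> > 0"
    and A_small: "(\<lambda>n. measure M {\<omega>\<in>space M. \<bar>Re (cnj u * Ln_fun k \<xi> (\<lambda>j. X j \<omega>) n z)\<bar> \<le> \<delta>}) \<longlonglongrightarrow> 0"
    using Ln_fun_anti_concentration[OF assms(1-5) k_small] by blast
  define U where "U n = {\<omega>\<in>space M. \<exists>j\<in>{1..n - k n}. X j \<omega> \<in> ball z (1 / real (Suc n)^2)}" for n
  define A where "A n = {\<omega>\<in>space M. \<bar>Re (cnj u * Ln_fun k \<xi> (\<lambda>j. X j \<omega>) n z)\<bar> \<le> \<delta>}" for n
  have U_small: "(\<lambda>n. measure M (U n)) \<longlonglongrightarrow> 0"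
    unfolding U_def using \<open>prob_space M\<close> law balls by (intro measure_ex_in_ball_tendsto_0) auto
  have U_sets: "U n \<in> P.events" and A_sets: "A n \<in> P.events" for n
  proof -
    have "U n = (\<Union>j\<in>{1..n - k n}. {\<omega>\<in>space M. X j \<omega> \<in> ball z (1 / real (Suc n)^2)})"
      by (auto simp: U_def)
    also have "\<dots> \<in> P.events" by (intro sets.finite_UN) auto
    finally show "U n \<in> P.events" .
    show "A n \<in> P.events" unfolding A_def Ln_fun_def by measurable
  qed
  have "\<forall>\<^sub>F n in sequentially. ?bad n \<subseteq> U n \<union> A n"
    using eventually_abs_ln_norm_Ln_fun_less[OF k_le \<xi>_far \<open>\<epsilon> > 0\<close> \<open>\<delta> > 0\<close> \<open>cmod u = 1\<close>]
  proof eventually_elim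
    case (elim n)
    show ?case
    proof (intro subsetI, rule ccontr)
      fix \<omega> assume bad: "\<omega> \<in> ?bad n" and "\<omega> \<notin> U n \<union> A n"
      then have "\<forall>j\<in>{1..n - k n}. 1 / real (Suc n)^2 \<le> cmod (z - X j \<omega>)"
        and "\<delta> < \<bar>Re (cnj u * Ln_fun k \<xi> (\<lambda>j. X j \<omega>) n z)\<bar>"
        by (force simp: U_def dist_norm, simp add: A_def)
      then show False
        using elim[THEN spec, of "\<lambda>j. X j \<omega>"] bad by auto
    qed
  qed
  then have "\<forall>\<^sub>F n in sequentially. measure M (?bad n) \<le> measure M (U n) + measure M (A n)"
  proof eventually_elim
    case (elim n)
    have "measure M (?bad n) \<le> measure M (U n \<union> A n)"
      using elim U_sets A_sets by (intro P.finite_measure_mono) auto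
    also have "\<dots> \<le> measure M (U n) + measure M (A n)"
      using U_sets A_sets by (rule measure_Un_le)
    finally show ?case .
  qed
  from tendsto_sandwich[OF _ this tendsto_const tendsto_add_zero[OF U_small A_small[folded A_def]]]
  show ?thesis by simp
qed

theorem mainTheorem15:
  fixes M :: "'a measure" and \<mu> :: "complex measure"
    and X :: "nat \<Rightarrow> 'a \<Rightarrow> complex"
    and k :: "nat \<Rightarrow> nat" and \<xi> :: "nat \<Rightarrow> nat \<Rightarrow> complex"
    and E :: "complex set"
  assumes "prob_space M"
    and "prob_space \<mu>"
    and nondeg: "\<And>c. \<mu> \<noteq> return borel c"
    and indep: "prob_space.indep_vars M (\<lambda>_. borel) X UNIV"
    and law: "\<And>j. distr M borel (X j) = \<mu>"
    and k_le: "\<And>n. k n \<le> n"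
    and k_small: "(\<lambda>n. real (k n) / real n) \<longlonglongrightarrow> 0"
    and E_null: "E \<in> null_sets lborel"
    and xi_cond: "\<And>z. z \<notin> E \<Longrightarrow>
        limsup (\<lambda>n. ereal (1 / real n) * (\<Sum>l\<in>{1..k n}. log_minus (cmod (z - \<xi> n l)))) = 0"
  shows "\<exists>F \<in> null_sets lborel. \<forall>z. z \<notin> F \<longrightarrow> (\<forall>\<epsilon>>0.
      (\<lambda>n. measure M {\<omega> \<in> space M.
          (\<exists>j\<in>{1..n - k n}. X j \<omega> = z) \<or> (\<exists>l\<in>{1..k n}. \<xi> n l = z) \<or>
          Ln_fun k \<xi> (\<lambda>j. X j \<omega>) n z = 0 \<or>
          \<bar>ln (cmod (Ln_fun k \<xi> (\<lambda>j. X j \<omega>) n z)) / real n\<bar> > \<epsilon>})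
      \<longlonglongrightarrow> 0)"
proof -
  have "(\<lambda>n. real (Suc n) * (1 / real (Suc n)^2) ^ DIM(complex)) = (\<lambda>n. inverse (real (Suc n) ^ 3))"
    by (simp add: fun_eq_iff field_simps power_Suc[symmetric] del: of_nat_Suc)
  then have "summable (\<lambda>n. real (Suc n) * (1 / real (Suc n)^2) ^ DIM(complex))"
    using inverse_power_summable[of 3, THEN summable_Suc_iff[THEN iffD2]] by simp
  then have "AE z in lborel. summable (\<lambda>n. real (Suc n) * measure \<mu> (ball z (1 / real (Suc n)^2)))"
    using \<open>prob_space \<mu>\<close> law[of 0]
    by (intro AE_summable_measure_ball) (auto simp: prob_space_def sets_distr[symmetric])
  then obtain N where "N \<in> null_sets lborel"
    and N: "{z \<in> space lborel. \<not> summable (\<lambda>n. real (Suc n) * measure \<mu> (ball z (1 / real (Suc n)^2)))} \<subseteq> N"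
    by (elim AE_E) (blast intro: null_setsI)
  show ?thesis
  proof (intro bexI[of _ "E \<union> N"] allI impI)
    fix z :: complex and \<epsilon> :: real assume "z \<notin> E \<union> N" "\<epsilon> > 0"
    then have "summable (\<lambda>n. real (Suc n) * measure \<mu> (ball z (1 / real (Suc n)^2)))"
      using N by auto
    from summable_LIMSEQ_zero[OF this] xi_cond[of z] \<open>z \<notin> E \<union> N\<close> \<open>\<epsilon> > 0\<close>
    show "(\<lambda>n. measure M {\<omega> \<in> space M.
          (\<exists>j\<in>{1..n - k n}. X j \<omega> = z) \<or> (\<exists>l\<in>{1..k n}. \<xi> n l = z) \<or>
          Ln_fun k \<xi> (\<lambda>j. X j \<omega>) n z = 0 \<or>
          \<bar>ln (cmod (Ln_fun k \<xi> (\<lambda>j. X j \<omega>) n z)) / real n\<bar> > \<epsilon>}) \<longlonglongrightarrow> 0"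
      by (intro measure_log_Ln_fun_large_tendsto_0[OF assms(1-7)]) auto
  qed (use E_null \<open>N \<in> null_sets lborel\<close> in auto)
qed

end
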